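(* Let $\mathbb{E}$ be a finitely complete category endowed with a fibrational class $\Sigma$ of split epimorphisms. (1) If $\mathbb{E}$ is $\Sigma$-protomodular, then it is a $\Sigma$-Mal'tsev category. (2) If in addition $\Sigma$ is point-congruous, then for every morphism $y\colon Y'\to Y$ the base-change functor $y^*\colon\Sigma_Y(\mathbb{E})\to\Sigma_{Y'}(\mathbb{E})$ (pullback along $y$) is conservative.
   Context: A split epimorphism is a pair $(f,s)$ with $fs=1$. A class $\Sigma$ of split epimorphisms is fibrational if it contains all split epimorphisms $(f,s)$ with $f$ invertible and is stable under pullback along any morphism; it is point-congruous if moreover the full subcategory $\Sigma(\mathbb{E})$ of the category $\mathrm{Pt}(\mathbb{E})$ of split epimorphisms (with commuting squares as morphisms) is closed under finite limits in $\mathrm{Pt}(\mathbb{E})$. $\Sigma_Y(\mathbb{E})$ is the category of split epimorphisms in $\Sigma$ with codomain $Y$ and morphisms commuting with the epimorphisms and the splittings. A pair of morphisms with common codomain $Z$ is jointly extremally epic if it factors jointly through no non-invertible monomorphism into $Z$. $\mathbb{E}$ is $\Sigma$-Mal'tsev if for every split epimorphism $(f,s)\colon X\rightleftarrows Y$ in $\Sigma$ and every split epimorphism $(g,t)$ with $g\colon Y'\to Y$, letting $X'=Y'\times_YX$, $s'=(1_{Y'},sg)$, $\bar t=(tf,1_X)$, the pair $(s',\bar t)$ is jointly extremally epic. A split epimorphism $(f,s)\colon X\rightleftarrows Y$ is strongly split when for every morphism $y\colon\bar Y\to Y$, with $x\colon\bar Y\times_YX\to X$ the pullback projection, the pair $(x,s)$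 is jointly extremally epic. $\mathbb{E}$ is $\Sigma$-protomodular when every split epimorphism in $\Sigma$ is strongly split. *)

theory Defs
  imports Main
begin

text \<open>A category with objects of type 'o and arrows of type 'a.
  Cmp C g f is the composite g after f.\<close>

record ('o, 'a) cat =
  Obj :: "'o set"
  Arr :: "'a set"
  Dom :: "'a \<Rightarrow> 'o"
  Cod :: "'a \<Rightarrow> 'o"
  Cmp :: "'a \<Rightarrow> 'a \<Rightarrow> 'a"
  Idn :: "'o \<Rightarrow> 'a"

definition hom :: "('o, 'a, 'm) cat_scheme \<Rightarrow> 'o \<Rightarrow> 'o \<Rightarrow> 'a set" where
  "hom C X Y = {f \<in> Arr C. Dom C f = X \<and> Cod C f = Y}"

definition category :: "('o, 'a, 'm) cat_scheme \<Rightarrow> bool" where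
  "category C \<longleftrightarrow>
     (\<forall>f \<in> Arr C. Dom C f \<in> Obj C \<and> Cod C f \<in> Obj C) \<and>
     (\<forall>X \<in> Obj C. Idn C X \<in> hom C X X) \<and>
     (\<forall>f g. f \<in> Arr C \<and> g \<in> Arr C \<and> Cod C f = Dom C g \<longrightarrow>
        Cmp C g f \<in> hom C (Dom C f) (Cod C g)) \<and>
     (\<forall>f \<in> Arr C. Cmp C f (Idn C (Dom C f)) = f \<and> Cmp C (Idn C (Cod C f)) f = f) \<and>
     (\<forall>f g h. f \<in> Arr C \<and> g \<in> Arr C \<and> h \<in> Arr C \<and> Cod C f = Dom C g \<and> Cod C g = Dom C h \<longrightarrow>
        Cmp C h (Cmp C g f) = Cmp C (Cmp C h g) f)"

definition iso :: "('o, 'a, 'm) cat_scheme \<Rightarrow> 'a \<Rightarrow> bool" where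
  "iso C f \<longleftrightarrow> f \<in> Arr C \<and>
     (\<exists>g \<in> hom C (Cod C f) (Dom C f).
        Cmp C g f = Idn C (Dom C f) \<and> Cmp C f g = Idn C (Cod C f))"

definition mono :: "('o, 'a, 'm) cat_scheme \<Rightarrow> 'a \<Rightarrow> bool" where
  "mono C m \<longleftrightarrow> m \<in> Arr C \<and>
     (\<forall>a b. a \<in> Arr C \<and> b \<in> Arr C \<and> Cod C a = Dom C m \<and> Cod C b = Dom C m \<and>
        Dom C a = Dom C b \<and> Cmp C m a = Cmp C m b \<longrightarrow> a = b)"

definition is_pullback :: "('o, 'a, 'm) cat_scheme \<Rightarrow> 'a \<Rightarrow> 'a \<Rightarrow> 'a \<Rightarrow> 'a \<Rightarrow> bool" where
  "is_pullback C f g p q \<longleftrightarrow>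
     f \<in> Arr C \<and> g \<in> Arr C \<and> Cod C f = Cod C g \<and>
     p \<in> hom C (Dom C p) (Dom C f) \<and> q \<in> hom C (Dom C p) (Dom C g) \<and>
     Cmp C f p = Cmp C g q \<and>
     (\<forall>W u v. u \<in> hom C W (Dom C f) \<and> v \<in> hom C W (Dom C g) \<and> Cmp C f u = Cmp C g v \<longrightarrow>
        (\<exists>!m. m \<in> hom C W (Dom C p) \<and> Cmp C p m = u \<and> Cmp C q m = v))"

record ('o, 'a) diagram =
  Vtx :: "nat set"
  Edg :: "nat set"
  Src :: "nat \<Rightarrow> nat"
  Tgt :: "nat \<Rightarrow> nat"
  DObj :: "nat \<Rightarrow> 'o"
  DArr :: "nat \<Rightarrow> 'a"

definition finite_diagram :: "('o, 'a, 'm) cat_scheme \<Rightarrow> ('o, 'a) diagram \<Rightarrow> bool" where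
  "finite_diagram C D \<longleftrightarrow> finite (Vtx D) \<and> finite (Edg D) \<and>
     (\<forall>v \<in> Vtx D. DObj D v \<in> Obj C) \<and>
     (\<forall>e \<in> Edg D. Src D e \<in> Vtx D \<and> Tgt D e \<in> Vtx D \<and>
        DArr D e \<in> hom C (DObj D (Src D e)) (DObj D (Tgt D e)))"

definition is_cone :: "('o, 'a, 'm) cat_scheme \<Rightarrow> ('o, 'a) diagram \<Rightarrow> 'o \<Rightarrow> (nat \<Rightarrow> 'a) \<Rightarrow> bool" where
  "is_cone C D L lam \<longleftrightarrow> L \<in> Obj C \<and>
     (\<forall>v \<in> Vtx D. lam v \<in> hom C L (DObj D v)) \<and>
     (\<forall>e \<in> Edg D. Cmp C (DArr D e) (lam (Src D e)) = lam (Tgt D e))"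

definition is_limit :: "('o, 'a, 'm) cat_scheme \<Rightarrow> ('o, 'a) diagram \<Rightarrow> 'o \<Rightarrow> (nat \<Rightarrow> 'a) \<Rightarrow> bool" where
  "is_limit C D L lam \<longleftrightarrow> is_cone C D L lam \<and>
     (\<forall>M mu. is_cone C D M mu \<longrightarrow>
        (\<exists>!m. m \<in> hom C M L \<and> (\<forall>v \<in> Vtx D. Cmp C (lam v) m = mu v)))"

definition finitely_complete :: "('o, 'a, 'm) cat_scheme \<Rightarrow> bool" where
  "finitely_complete C \<longleftrightarrow> (\<forall>D. finite_diagram C D \<longrightarrow> (\<exists>L lam. is_limit C D L lam))"

definition split_epi :: "('o, 'a, 'm) cat_scheme \<Rightarrow> 'a \<Rightarrow> 'a \<Rightarrow> bool" where
  "split_epi C f s \<longleftrightarrow> f \<in> Arr C \<and> s \<in> hom C (Cod C f) (Dom C f) \<and>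
     Cmp C f s = Idn C (Cod C f)"

text \<open>Objects of Pt(E): split epimorphisms (f,s). Arrows: (P, Q, a, b), a commuting
  square from P to Q (a between the domains, b between the codomains).\<close>

definition Pt :: "('o, 'a, 'm) cat_scheme \<Rightarrow> ('a \<times> 'a, ('a \<times> 'a) \<times> ('a \<times> 'a) \<times> 'a \<times> 'a) cat" where
  "Pt C = \<lparr> Obj = {(f, s). split_epi C f s},
     Arr = {(P, Q, a, b). split_epi C (fst P) (snd P) \<and> split_epi C (fst Q) (snd Q) \<and>
              a \<in> hom C (Dom C (fst P)) (Dom C (fst Q)) \<and>
              b \<in> hom C (Cod C (fst P)) (Cod C (fst Q)) \<and>
              Cmp C (fst Q) a = Cmp C b (fst P) \<and>
              Cmp C a (snd P) = Cmp C (snd Q) b},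
     Dom = (\<lambda>(P, Q, a, b). P),
     Cod = (\<lambda>(P, Q, a, b). Q),
     Cmp = (\<lambda>(Q', R, a', b') (P, Q, a, b). (P, R, Cmp C a' a, Cmp C b' b)),
     Idn = (\<lambda>P. (P, P, Idn C (Dom C (fst P)), Idn C (Cod C (fst P)))) \<rparr>"

definition class_of_split_epis :: "('o, 'a, 'm) cat_scheme \<Rightarrow> ('a \<times> 'a) set \<Rightarrow> bool" where
  "class_of_split_epis C \<Sigma> \<longleftrightarrow> (\<forall>(f, s) \<in> \<Sigma>. split_epi C f s)"

definition fibrational :: "('o, 'a, 'm) cat_scheme \<Rightarrow> ('a \<times> 'a) set \<Rightarrow> bool" where
  "fibrational C \<Sigma> \<longleftrightarrow>
     (\<forall>f s. split_epi C f s \<and> iso C f \<longrightarrow> (f, s) \<in> \<Sigma>) \<and>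
     (\<forall>f s y x f' s'. (f, s) \<in> \<Sigma> \<and> y \<in> Arr C \<and> Cod C y = Cod C f \<and>
        is_pullback C f y x f' \<and> s' \<in> hom C (Dom C y) (Dom C x) \<and>
        Cmp C f' s' = Idn C (Dom C y) \<and> Cmp C x s' = Cmp C s y \<longrightarrow> (f', s') \<in> \<Sigma>)"

definition point_congruous :: "('o, 'a, 'm) cat_scheme \<Rightarrow> ('a \<times> 'a) set \<Rightarrow> bool" where
  "point_congruous C \<Sigma> \<longleftrightarrow> fibrational C \<Sigma> \<and>
     (\<forall>D L lam. finite_diagram (Pt C) D \<and> (\<forall>v \<in> Vtx D. DObj D v \<in> \<Sigma>) \<and>
        is_limit (Pt C) D L lam \<longrightarrow> L \<in> \<Sigma>)"

definition jointly_extremally_epic :: "('o, 'a, 'm) cat_scheme \<Rightarrow> 'a \<Rightarrow> 'a \<Rightarrow> bool" where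
  "jointly_extremally_epic C u v \<longleftrightarrow> u \<in> Arr C \<and> v \<in> Arr C \<and> Cod C u = Cod C v \<and>
     (\<forall>m u' v'. mono C m \<and> Cod C m = Cod C u \<and>
        u' \<in> hom C (Dom C u) (Dom C m) \<and> v' \<in> hom C (Dom C v) (Dom C m) \<and>
        Cmp C m u' = u \<and> Cmp C m v' = v \<longrightarrow> iso C m)"

text \<open>Sigma-Mal'tsev. X' is a pullback of f : X -> Y along g : Y' -> Y with projections
  x : X' -> X and f'' : X' -> Y'; s' = (1, s g) and tb = (t f, 1).\<close>

definition Sigma_Maltsev :: "('o, 'a, 'm) cat_scheme \<Rightarrow> ('a \<times> 'a) set \<Rightarrow> bool" where
  "Sigma_Maltsev C \<Sigma> \<longleftrightarrow>
     (\<forall>f s g t x f'' s' tb. (f, s) \<in> \<Sigma> \<and> split_epi C g t \<and> Cod C g = Cod C f \<and>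
        is_pullback C f g x f'' \<and>
        s' \<in> hom C (Dom C g) (Dom C x) \<and> Cmp C f'' s' = Idn C (Dom C g) \<and> Cmp C x s' = Cmp C s g \<and>
        tb \<in> hom C (Dom C f) (Dom C x) \<and> Cmp C f'' tb = Cmp C t f \<and> Cmp C x tb = Idn C (Dom C f)
        \<longrightarrow> jointly_extremally_epic C s' tb)"

definition strongly_split :: "('o, 'a, 'm) cat_scheme \<Rightarrow> 'a \<Rightarrow> 'a \<Rightarrow> bool" where
  "strongly_split C f s \<longleftrightarrow> split_epi C f s \<and>
     (\<forall>y x f'. y \<in> Arr C \<and> Cod C y = Cod C f \<and> is_pullback C f y x f' \<longrightarrow>
        jointly_extremally_epic C x s)"

definition Sigma_protomodular :: "('o, 'a, 'm) cat_scheme \<Rightarrow> ('a \<times> 'a) set \<Rightarrow> bool" where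
  "Sigma_protomodular C \<Sigma> \<longleftrightarrow> (\<forall>(f, s) \<in> \<Sigma>. strongly_split C f s)"

definition Sigma_over :: "('o, 'a, 'm) cat_scheme \<Rightarrow> ('a \<times> 'a) set \<Rightarrow> 'o \<Rightarrow>
    ('a \<times> 'a, ('a \<times> 'a) \<times> ('a \<times> 'a) \<times> 'a) cat" where
  "Sigma_over C \<Sigma> Y = \<lparr> Obj = {P \<in> \<Sigma>. Cod C (fst P) = Y},
     Arr = {(P, Q, a). P \<in> \<Sigma> \<and> Cod C (fst P) = Y \<and> Q \<in> \<Sigma> \<and> Cod C (fst Q) = Y \<and>
              a \<in> hom C (Dom C (fst P)) (Dom C (fst Q)) \<and>
              Cmp C (fst Q) a = fst P \<and> Cmp C a (snd P) = snd Q},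
     Dom = (\<lambda>(P, Q, a). P),
     Cod = (\<lambda>(P, Q, a). Q),
     Cmp = (\<lambda>(Q', R, a') (P, Q, a). (P, R, Cmp C a' a)),
     Idn = (\<lambda>P. (P, P, Idn C (Dom C (fst P)))) \<rparr>"

definition pb_data :: "('o, 'a, 'm) cat_scheme \<Rightarrow> 'a \<Rightarrow> 'a \<Rightarrow> 'a \<times> 'a" where
  "pb_data C f y = (SOME (x, f'). is_pullback C f y x f')"

definition bc_obj :: "('o, 'a, 'm) cat_scheme \<Rightarrow> 'a \<Rightarrow> 'a \<times> 'a \<Rightarrow> 'a \<times> 'a" where
  "bc_obj C y P = (case pb_data C (fst P) y of (x, f') \<Rightarrow>
     (f', THE s'. s' \<in> hom C (Dom C y) (Dom C x) \<and> Cmp C f' s' = Idn C (Dom C y) \<and>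
                  Cmp C x s' = Cmp C (snd P) y))"

definition base_change :: "('o, 'a, 'm) cat_scheme \<Rightarrow> 'a \<Rightarrow>
    ('a \<times> 'a) \<times> ('a \<times> 'a) \<times> 'a \<Rightarrow> ('a \<times> 'a) \<times> ('a \<times> 'a) \<times> 'a" where
  "base_change C y A = (case A of (P, Q, a) \<Rightarrow>
     (case pb_data C (fst P) y of (x1, f1) \<Rightarrow>
      case pb_data C (fst Q) y of (x2, f2) \<Rightarrow>
       (bc_obj C y P, bc_obj C y Q,
        THE m. m \<in> hom C (Dom C x1) (Dom C x2) \<and> Cmp C f2 m = f1 \<and> Cmp C x2 m = Cmp C a x1)))"

definition conservative :: "('o1, 'a1, 'm1) cat_scheme \<Rightarrow> ('o2, 'a2, 'm2) cat_scheme \<Rightarrow>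
    ('a1 \<Rightarrow> 'a2) \<Rightarrow> bool" where
  "conservative A B F \<longleftrightarrow> (\<forall>a \<in> Arr A. iso B (F a) \<longrightarrow> iso A a)"

end

theory Submission
  imports Defs
begin

text \<open>
  (1) Pulling (f, s) \<in> \<Sigma> back along the split epimorphism (g, t) gives a point (f'', s') \<in> \<Sigma>,
  and (f, s) is in turn the pullback of (f'', s') along the section t, with projection tb.
  Strong splitness of (f'', s') then says exactly that (s', tb) is jointly extremally epic.

  (2) Let a : (f, s) \<rightarrow> (g, t) be a morphism of \<Sigma>_Y(E) whose pullback y*(a) is invertible. The
  kernel pair (p1, p2) of a, computed in Pt(E), is the point (f p1, d s) over Y, where d is the
  diagonal; it lies in \<Sigma> by point-congruity. Its pullback along y factors through d since y*(a)
  is mono, so \<Sigma>-protomodularity makes the split mono d invertible, whence p1 = p2 and a is mono.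
  Finally a is invertible, because the jointly extremally epic pair formed by t and the pullback
  of g along y factors through a.
\<close>

lemma comp_arr:
  "category C \<Longrightarrow> f \<in> Arr C \<Longrightarrow> g \<in> Arr C \<Longrightarrow> Cod C f = Dom C g \<Longrightarrow> Cmp C g f \<in> Arr C"
  and Dom_comp:
  "category C \<Longrightarrow> f \<in> Arr C \<Longrightarrow> g \<in> Arr C \<Longrightarrow> Cod C f = Dom C g \<Longrightarrow> Dom C (Cmp C g f) = Dom C f"
  and Cod_comp:
  "category C \<Longrightarrow> f \<in> Arr C \<Longrightarrow> g \<in> Arr C \<Longrightarrow> Cod C f = Dom C g \<Longrightarrow> Cod C (Cmp C g f) = Cod C g"
  unfolding category_def hom_def by blast+

lemma comp_assoc:
  "category C \<Longrightarrow> f \<in> Arr C \<Longrightarrow> g \<in> Arr C \<Longrightarrow> h \<in> Arr C \<Longrightarrow> Cod C f = Dom C g \<Longrightarrow>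
    Cod C g = Dom C h \<Longrightarrow> Cmp C (Cmp C h g) f = Cmp C h (Cmp C g f)"
  unfolding category_def by metis

lemma comp_Idn_left: "category C \<Longrightarrow> f \<in> Arr C \<Longrightarrow> Cod C f = Y \<Longrightarrow> Cmp C (Idn C Y) f = f"
  and comp_Idn_right: "category C \<Longrightarrow> f \<in> Arr C \<Longrightarrow> Dom C f = X \<Longrightarrow> Cmp C f (Idn C X) = f"
  unfolding category_def by blast+

lemma Dom_in_Obj: "category C \<Longrightarrow> f \<in> Arr C \<Longrightarrow> Dom C f \<in> Obj C"
  and Cod_in_Obj: "category C \<Longrightarrow> f \<in> Arr C \<Longrightarrow> Cod C f \<in> Obj C"
  unfolding category_def by blast+

lemma Idn_arr: "category C \<Longrightarrow> X \<in> Obj C \<Longrightarrow> Idn C X \<in> Arr C"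
  and Dom_Idn: "category C \<Longrightarrow> X \<in> Obj C \<Longrightarrow> Dom C (Idn C X) = X"
  and Cod_Idn: "category C \<Longrightarrow> X \<in> Obj C \<Longrightarrow> Cod C (Idn C X) = X"
  unfolding category_def hom_def by blast+

lemma comp_reassoc:
  "category C \<Longrightarrow> Cmp C g f = k \<Longrightarrow> f \<in> Arr C \<Longrightarrow> g \<in> Arr C \<Longrightarrow> Cod C f = Dom C g \<Longrightarrow>
    z \<in> Arr C \<Longrightarrow> Cod C z = Dom C f \<Longrightarrow> Cmp C g (Cmp C f z) = Cmp C k z"
  using comp_assoc[of C z f g] by simp

lemmas category_simps = comp_arr Dom_comp Cod_comp comp_assoc comp_Idn_left comp_Idn_right
  Dom_in_Obj Cod_in_Obj Idn_arr Dom_Idn Cod_Idn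

lemma iso_inverse:
  assumes "iso C m"
  obtains m' where "m' \<in> hom C (Cod C m) (Dom C m)" "Cmp C m' m = Idn C (Dom C m)"
    "Cmp C m m' = Idn C (Cod C m)"
  using assms unfolding iso_def by blast

lemma iso_cancel_right:
  assumes C: "category C" and "iso C d" and uv: "u \<in> Arr C" "v \<in> Arr C" "Dom C u = Cod C d"
    "Dom C v = Cod C d" and eq: "Cmp C u d = Cmp C v d"
  shows "u = v"
proof -
  obtain d' where d': "d' \<in> hom C (Cod C d) (Dom C d)" "Cmp C d d' = Idn C (Cod C d)"
    using iso_inverse[OF \<open>iso C d\<close>] by blast
  have "d \<in> Arr C" using \<open>iso C d\<close> by (simp add: iso_def)
  have "Cmp C (Cmp C u d) d' = Cmp C (Cmp C v d) d'" using eq by simp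
  then show ?thesis using C uv d' \<open>d \<in> Arr C\<close> by (simp add: hom_def category_simps)
qed

lemma mono_if_retraction:
  assumes C: "category C" and "d \<in> Arr C" "r \<in> Arr C" "Cod C d = Dom C r"
    and "Cmp C r d = Idn C (Dom C d)"
  shows "mono C d"
  unfolding mono_def
proof (intro conjI allI impI)
  show "d \<in> Arr C" by fact
  fix u v
  assume "u \<in> Arr C \<and> v \<in> Arr C \<and> Cod C u = Dom C d \<and> Cod C v = Dom C d \<and> Dom C u = Dom C v \<and>
    Cmp C d u = Cmp C d v"
  then have "Cmp C r (Cmp C d u) = Cmp C r (Cmp C d v)" and "u \<in> Arr C" "v \<in> Arr C"
    "Cod C u = Dom C d" "Cod C v = Dom C d" by simp_all
  then show "u = v" using assms by (metis comp_assoc comp_Idn_left)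
qed

lemma mono_if_iso:
  assumes C: "category C" and "iso C m"
  shows "mono C m"
proof -
  obtain m' where "m' \<in> hom C (Cod C m) (Dom C m)" "Cmp C m' m = Idn C (Dom C m)"
    using iso_inverse[OF \<open>iso C m\<close>] by blast
  moreover have "m \<in> Arr C" using \<open>iso C m\<close> by (simp add: iso_def)
  ultimately show ?thesis using mono_if_retraction[OF C, of m m'] by (simp add: hom_def)
qed

lemma split_epiD:
  "split_epi C f s \<Longrightarrow> f \<in> Arr C"
  "split_epi C f s \<Longrightarrow> s \<in> Arr C"
  "split_epi C f s \<Longrightarrow> Dom C s = Cod C f"
  "split_epi C f s \<Longrightarrow> Cod C s = Dom C f"
  "split_epi C f s \<Longrightarrow> Cmp C f s = Idn C (Cod C f)"
  by (simp_all add: split_epi_def hom_def)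

lemma pullbackD:
  assumes "is_pullback C f g p q"
  shows "f \<in> Arr C" "g \<in> Arr C" "Cod C g = Cod C f" "p \<in> Arr C" "q \<in> Arr C"
    "Cod C p = Dom C f" "Dom C q = Dom C p" "Cod C q = Dom C g" "Cmp C f p = Cmp C g q"
  using assms unfolding is_pullback_def hom_def by auto

lemma pullback_mediator:
  assumes "is_pullback C f g p q"
    and "u \<in> hom C W (Dom C f)" "v \<in> hom C W (Dom C g)" "Cmp C f u = Cmp C g v"
  obtains m where "m \<in> hom C W (Dom C p)" "Cmp C p m = u" "Cmp C q m = v"
  using assms unfolding is_pullback_def by blast

lemma pullback_cancel:
  assumes C: "category C" and pb: "is_pullback C f g p q"
    and "m1 \<in> hom C W (Dom C p)" "m2 \<in> hom C W (Dom C p)"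
    and "Cmp C p m1 = Cmp C p m2" "Cmp C q m1 = Cmp C q m2"
  shows "m1 = m2"
proof -
  note P = pullbackD[OF pb]
  have "Cmp C f (Cmp C p m1) = Cmp C g (Cmp C q m1)"
    using assms P by (simp add: hom_def category_simps comp_reassoc[OF C P(9)])
  moreover have "Cmp C p m1 \<in> hom C W (Dom C f)" "Cmp C q m1 \<in> hom C W (Dom C g)"
    using assms P by (simp_all add: hom_def category_simps)
  ultimately have "\<exists>!m. m \<in> hom C W (Dom C p) \<and> Cmp C p m = Cmp C p m1 \<and> Cmp C q m = Cmp C q m1"
    using pb unfolding is_pullback_def by blast
  then show ?thesis using assms by metis
qed

definition cospan :: "('o, 'a, 'm) cat_scheme \<Rightarrow> 'a \<Rightarrow> 'a \<Rightarrow> ('o, 'a) diagram" where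
  "cospan C f g = \<lparr> Vtx = {0, 1, 2}, Edg = {0, 1}, Src = (\<lambda>e. e), Tgt = (\<lambda>e. 2),
     DObj = (\<lambda>v. if v = 0 then Dom C f else if v = 1 then Dom C g else Cod C f),
     DArr = (\<lambda>e. if e = 0 then f else g) \<rparr>"

lemma finite_diagram_cospan:
  "category C \<Longrightarrow> f \<in> Arr C \<Longrightarrow> g \<in> Arr C \<Longrightarrow> Cod C g = Cod C f \<Longrightarrow> finite_diagram C (cospan C f g)"
  by (auto simp: finite_diagram_def cospan_def hom_def category_simps)

lemma is_cone_cospan_iff:
  "is_cone C (cospan C f g) L lam \<longleftrightarrow> L \<in> Obj C \<and>
     lam 0 \<in> hom C L (Dom C f) \<and> lam 1 \<in> hom C L (Dom C g) \<and> lam 2 \<in> hom C L (Cod C f) \<and>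
     Cmp C f (lam 0) = lam 2 \<and> Cmp C g (lam 1) = lam 2"
  by (auto simp: is_cone_def cospan_def)

lemma pullback_if_cospan_limit:
  assumes C: "category C" and "f \<in> Arr C" "g \<in> Arr C" "Cod C g = Cod C f"
    and lim: "is_limit C (cospan C f g) L lam"
  shows "is_pullback C f g (lam 0) (lam 1)"
  unfolding is_pullback_def
proof (intro conjI allI impI)
  have cone: "is_cone C (cospan C f g) L lam" using lim by (simp add: is_limit_def)
  then have lam: "lam 0 \<in> hom C L (Dom C f)" "lam 1 \<in> hom C L (Dom C g)"
    "Cmp C f (lam 0) = lam 2" "Cmp C g (lam 1) = lam 2"
    by (simp_all add: is_cone_cospan_iff)
  then show "lam 0 \<in> hom C (Dom C (lam 0)) (Dom C f)" "lam 1 \<in> hom C (Dom C (lam 0)) (Dom C g)"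
    "Cmp C f (lam 0) = Cmp C g (lam 1)"
    by (simp_all add: hom_def)
  show "f \<in> Arr C" "g \<in> Arr C" "Cod C f = Cod C g" using assms by simp_all
  fix W u v
  assume uv: "u \<in> hom C W (Dom C f) \<and> v \<in> hom C W (Dom C g) \<and> Cmp C f u = Cmp C g v"
  let ?mu = "\<lambda>i::nat. if i = 0 then u else if i = 1 then v else Cmp C f u"
  have "W \<in> Obj C" using uv Dom_in_Obj[OF C, of u] by (simp add: hom_def)
  then have "is_cone C (cospan C f g) W ?mu"
    using uv assms by (simp add: is_cone_cospan_iff hom_def category_simps)
  then have "\<exists>!m. m \<in> hom C W L \<and> (\<forall>i \<in> Vtx (cospan C f g). Cmp C (lam i) m = ?mu i)"
    using lim unfolding is_limit_def by blast
  then obtain m where m: "m \<in> hom C W L" "\<forall>i \<in> Vtx (cospan C f g). Cmp C (lam i) m = ?mu i"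
    and uniq: "\<And>m'. m' \<in> hom C W L \<Longrightarrow> \<forall>i \<in> Vtx (cospan C f g). Cmp C (lam i) m' = ?mu i \<Longrightarrow> m' = m"
    by blast
  have L: "Dom C (lam 0) = L" using lam by (simp add: hom_def)
  show "\<exists>!m. m \<in> hom C W (Dom C (lam 0)) \<and> Cmp C (lam 0) m = u \<and> Cmp C (lam 1) m = v"
  proof
    show "m \<in> hom C W (Dom C (lam 0)) \<and> Cmp C (lam 0) m = u \<and> Cmp C (lam 1) m = v"
      using m L by (simp add: cospan_def)
  next
    fix m'
    assume m': "m' \<in> hom C W (Dom C (lam 0)) \<and> Cmp C (lam 0) m' = u \<and> Cmp C (lam 1) m' = v"
    then have "Cmp C (lam 2) m' = Cmp C f u"
      using C lam L assms by (auto simp: hom_def comp_reassoc[OF C lam(3)])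
    then show "m' = m" using uniq m' L by (simp add: cospan_def)
  qed
qed

lemma cospan_limit_if_pullback:
  assumes C: "category C" and pb: "is_pullback C f g p q"
  shows "is_limit C (cospan C f g) (Dom C p) (\<lambda>i. if i = 0 then p else if i = 1 then q else Cmp C f p)"
    (is "is_limit C _ _ ?lam")
  unfolding is_limit_def
proof (intro conjI allI impI)
  note P = pullbackD[OF pb]
  show "is_cone C (cospan C f g) (Dom C p) ?lam"
    using C P by (simp add: is_cone_cospan_iff hom_def Dom_in_Obj comp_arr Dom_comp Cod_comp)
  fix M mu
  assume "is_cone C (cospan C f g) M mu"
  then have mu: "mu 0 \<in> hom C M (Dom C f)" "mu 1 \<in> hom C M (Dom C g)"
    "Cmp C f (mu 0) = mu 2" "Cmp C g (mu 1) = mu 2"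
    by (simp_all add: is_cone_cospan_iff)
  moreover have "Cmp C f (mu 0) = Cmp C g (mu 1)" using mu by simp
  ultimately obtain m where m: "m \<in> hom C M (Dom C p)" "Cmp C p m = mu 0" "Cmp C q m = mu 1"
    using pullback_mediator[OF pb] by blast
  show "\<exists>!m. m \<in> hom C M (Dom C p) \<and> (\<forall>i \<in> Vtx (cospan C f g). Cmp C (?lam i) m = mu i)"
  proof
    have "Cmp C (Cmp C f p) m = mu 2" using C P m mu by (simp add: hom_def category_simps)
    then show "m \<in> hom C M (Dom C p) \<and> (\<forall>i \<in> Vtx (cospan C f g). Cmp C (?lam i) m = mu i)"
      using m by (simp add: cospan_def)
  next
    fix m'
    assume m': "m' \<in> hom C M (Dom C p) \<and> (\<forall>i \<in> Vtx (cospan C f g). Cmp C (?lam i) m' = mu i)"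
    then have "Cmp C p m' = mu 0" "Cmp C q m' = mu 1"
      by (auto simp: cospan_def dest: bspec[of _ _ 0] bspec[of _ _ 1])
    then show "m' = m" using m' m pullback_cancel[OF C pb, of m' M m] by simp
  qed
qed

lemma pullback_exists:
  assumes C: "category C" and "finitely_complete C" and "f \<in> Arr C" "g \<in> Arr C" "Cod C g = Cod C f"
  obtains p q where "is_pullback C f g p q"
proof -
  have "finite_diagram C (cospan C f g)" using finite_diagram_cospan[OF assms(1,3-5)] .
  then obtain L lam where "is_limit C (cospan C f g) L lam"
    using \<open>finitely_complete C\<close> unfolding finitely_complete_def by blast
  then show ?thesis by (rule that[OF pullback_if_cospan_limit[OF assms(1,3-5)]])
qed

lemma is_pullback_pb_data:
  assumes "category C" "finitely_complete C" "f \<in> Arr C" "g \<in> Arr C" "Cod C g = Cod C f"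
  shows "is_pullback C f g (fst (pb_data C f g)) (snd (pb_data C f g))"
proof -
  obtain p q where "is_pullback C f g p q" using pullback_exists[OF assms] .
  then have "\<exists>pq. case pq of (x, f') \<Rightarrow> is_pullback C f g x f'" by auto
  then have "case pb_data C f g of (x, f') \<Rightarrow> is_pullback C f g x f'"
    unfolding pb_data_def by (rule someI_ex)
  then show ?thesis by (simp add: case_prod_beta)
qed

lemma Pt_Arr_iff:
  "(P, Q, a, b) \<in> Arr (Pt C) \<longleftrightarrow> split_epi C (fst P) (snd P) \<and> split_epi C (fst Q) (snd Q) \<and>
     a \<in> hom C (Dom C (fst P)) (Dom C (fst Q)) \<and> b \<in> hom C (Cod C (fst P)) (Cod C (fst Q)) \<and>
     Cmp C (fst Q) a = Cmp C b (fst P) \<and> Cmp C a (snd P) = Cmp C (snd Q) b"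
  by (simp add: Pt_def)

lemma Pt_Obj_iff: "P \<in> Obj (Pt C) \<longleftrightarrow> split_epi C (fst P) (snd P)"
  by (cases P) (simp add: Pt_def)

lemma Pt_Dom [simp]: "Dom (Pt C) (P, Q, a, b) = P"
  and Pt_Cod [simp]: "Cod (Pt C) (P, Q, a, b) = Q"
  and Pt_Cmp [simp]: "Cmp (Pt C) (Q', R, a', b') (P, Q, a, b) = (P, R, Cmp C a' a, Cmp C b' b)"
  and Pt_Idn [simp]: "Idn (Pt C) P = (P, P, Idn C (Dom C (fst P)), Idn C (Cod C (fst P)))"
  by (simp_all add: Pt_def)

lemma Pt_hom_iff:
  "z \<in> hom (Pt C) P Q \<longleftrightarrow> (\<exists>a b. z = (P, Q, a, b) \<and> (P, Q, a, b) \<in> Arr (Pt C))"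
  by (cases z) (auto simp: hom_def Pt_def)

lemma Pt_comp_arr:
  assumes C: "category C" and A: "(P, Q, a, b) \<in> Arr (Pt C)" and A': "(Q, R, a', b') \<in> Arr (Pt C)"
  shows "(P, R, Cmp C a' a, Cmp C b' b) \<in> Arr (Pt C)"
proof -
  have a: "a \<in> Arr C" "Dom C a = Dom C (fst P)" "Cod C a = Dom C (fst Q)"
    "b \<in> Arr C" "Dom C b = Cod C (fst P)" "Cod C b = Cod C (fst Q)"
    and sq: "Cmp C (fst Q) a = Cmp C b (fst P)" "Cmp C a (snd P) = Cmp C (snd Q) b"
    using A by (simp_all add: Pt_Arr_iff hom_def)
  have a': "a' \<in> Arr C" "Dom C a' = Dom C (fst Q)" "Cod C a' = Dom C (fst R)"
    "b' \<in> Arr C" "Dom C b' = Cod C (fst Q)" "Cod C b' = Cod C (fst R)"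
    and sq': "Cmp C (fst R) a' = Cmp C b' (fst Q)" "Cmp C a' (snd Q) = Cmp C (snd R) b'"
    using A' by (simp_all add: Pt_Arr_iff hom_def)
  have P: "split_epi C (fst P) (snd P)" and Q: "split_epi C (fst Q) (snd Q)"
    and R: "split_epi C (fst R) (snd R)"
    using A A' by (simp_all add: Pt_Arr_iff)
  note PR = split_epiD[OF P] split_epiD[OF Q] split_epiD[OF R]
  show ?thesis
    using C a a' PR P R sq
    by (simp add: Pt_Arr_iff hom_def category_simps comp_reassoc[OF C sq'(1)] comp_reassoc[OF C sq'(2)])
qed

lemma category_Pt:
  assumes C: "category C"
  shows "category (Pt C)"
  unfolding category_def
proof (intro conjI ballI allI impI)
  fix A assume "A \<in> Arr (Pt C)"
  then show "Dom (Pt C) A \<in> Obj (Pt C)" "Cod (Pt C) A \<in> Obj (Pt C)"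
    by (auto simp: Pt_def)
next
  fix P assume "P \<in> Obj (Pt C)"
  then have P: "split_epi C (fst P) (snd P)" by (simp add: Pt_Obj_iff)
  show "Idn (Pt C) P \<in> hom (Pt C) P P"
    using C P split_epiD[OF P] by (simp add: Pt_hom_iff Pt_Arr_iff hom_def category_simps)
next
  fix A B assume "A \<in> Arr (Pt C) \<and> B \<in> Arr (Pt C) \<and> Cod (Pt C) A = Dom (Pt C) B"
  then show "Cmp (Pt C) B A \<in> hom (Pt C) (Dom (Pt C) A) (Cod (Pt C) B)"
    using Pt_comp_arr[OF C] by (cases A, cases B) (auto simp: Pt_hom_iff)
next
  fix A assume "A \<in> Arr (Pt C)"
  then show "Cmp (Pt C) A (Idn (Pt C) (Dom (Pt C) A)) = A" "Cmp (Pt C) (Idn (Pt C) (Cod (Pt C) A)) A = A"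
    using C by (cases A; auto simp: Pt_Arr_iff hom_def category_simps)+
next
  fix A B D assume "A \<in> Arr (Pt C) \<and> B \<in> Arr (Pt C) \<and> D \<in> Arr (Pt C) \<and>
    Cod (Pt C) A = Dom (Pt C) B \<and> Cod (Pt C) B = Dom (Pt C) D"
  then show "Cmp (Pt C) D (Cmp (Pt C) B A) = Cmp (Pt C) (Cmp (Pt C) D B) A"
    using C by (cases A, cases B, cases D) (auto simp: Pt_Arr_iff hom_def category_simps)
qed

section \<open>\<Sigma>-protomodular categories are \<Sigma>-Mal'tsev\<close>

lemma jointly_extremally_epic_sym:
  "jointly_extremally_epic C u v \<Longrightarrow> jointly_extremally_epic C v u"
  unfolding jointly_extremally_epic_def by metis

lemma jointly_extremally_epicD:
  assumes "jointly_extremally_epic C u v" and "mono C m" "Cod C m = Cod C u"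
    and "u' \<in> hom C (Dom C u) (Dom C m)" "v' \<in> hom C (Dom C v) (Dom C m)"
    and "Cmp C m u' = u" "Cmp C m v' = v"
  shows "iso C m"
  using assms unfolding jointly_extremally_epic_def by blast

lemma strongly_splitD:
  "strongly_split C f s \<Longrightarrow> y \<in> Arr C \<Longrightarrow> Cod C y = Cod C f \<Longrightarrow> is_pullback C f y x f' \<Longrightarrow>
    jointly_extremally_epic C x s"
  unfolding strongly_split_def by blast

lemma pullback_in_fibrational:
  "fibrational C \<Sigma> \<Longrightarrow> (f, s) \<in> \<Sigma> \<Longrightarrow> y \<in> Arr C \<Longrightarrow> Cod C y = Cod C f \<Longrightarrow>
    is_pullback C f y x f' \<Longrightarrow> s' \<in> hom C (Dom C y) (Dom C x) \<Longrightarrow> Cmp C f' s' = Idn C (Dom C y) \<Longrightarrow>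
    Cmp C x s' = Cmp C s y \<Longrightarrow> (f', s') \<in> \<Sigma>"
  unfolding fibrational_def by blast

lemma pullback_along_section:
  assumes C: "category C" and pb: "is_pullback C f g x f''"
    and t: "t \<in> hom C (Cod C f) (Dom C g)" "Cmp C g t = Idn C (Cod C f)"
    and tb: "tb \<in> hom C (Dom C f) (Dom C x)" "Cmp C f'' tb = Cmp C t f" "Cmp C x tb = Idn C (Dom C f)"
  shows "is_pullback C f'' t tb f"
  unfolding is_pullback_def
proof (intro conjI allI impI)
  note P = pullbackD[OF pb]
  have tA: "t \<in> Arr C" "Dom C t = Cod C f" "Cod C t = Dom C g"
    and tbA: "tb \<in> Arr C" "Dom C tb = Dom C f" "Cod C tb = Dom C x"
    using t tb by (simp_all add: hom_def)
  note simps = C P(1-8) tA tbA category_simps comp_reassoc[OF C t(2)] comp_reassoc[OF C tb(3)]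
  show "f'' \<in> Arr C" "t \<in> Arr C" "Cod C f'' = Cod C t" "tb \<in> hom C (Dom C tb) (Dom C f'')"
    "f \<in> hom C (Dom C tb) (Dom C t)" "Cmp C f'' tb = Cmp C t f"
    using tb(2) by (simp_all add: hom_def simps)
  fix W u v
  assume "u \<in> hom C W (Dom C f'') \<and> v \<in> hom C W (Dom C t) \<and> Cmp C f'' u = Cmp C t v"
  then have u: "u \<in> Arr C" "Dom C u = W" "Cod C u = Dom C x" and v: "v \<in> Arr C" "Dom C v = W"
    "Cod C v = Cod C f" and uv: "Cmp C f'' u = Cmp C t v"
    using P tA by (simp_all add: hom_def)
  have fxu: "Cmp C f (Cmp C x u) = v"
    using u v by (simp add: simps comp_reassoc[OF C P(9)] uv)
  have tbxu: "Cmp C tb (Cmp C x u) = u"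
    by (rule pullback_cancel[OF C pb, of _ W])
      (use u v fxu uv in \<open>simp_all add: hom_def simps comp_reassoc[OF C tb(2)]\<close>)
  show "\<exists>!m. m \<in> hom C W (Dom C tb) \<and> Cmp C tb m = u \<and> Cmp C f m = v"
  proof
    show "Cmp C x u \<in> hom C W (Dom C tb) \<and> Cmp C tb (Cmp C x u) = u \<and> Cmp C f (Cmp C x u) = v"
      using u tbxu fxu by (simp add: hom_def simps)
  next
    fix m
    assume m: "m \<in> hom C W (Dom C tb) \<and> Cmp C tb m = u \<and> Cmp C f m = v"
    then have "m \<in> Arr C" "Cod C m = Dom C f" by (simp_all add: hom_def simps)
    then have "Cmp C x (Cmp C tb m) = m" by (simp add: simps)
    then show "m = Cmp C x u" using m by simp
  qed
qed

theorem Sigma_Maltsev_if_Sigma_protomodular: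
  assumes C: "category C" and fib: "fibrational C \<Sigma>" and pm: "Sigma_protomodular C \<Sigma>"
  shows "Sigma_Maltsev C \<Sigma>"
  unfolding Sigma_Maltsev_def
proof (intro allI impI, elim conjE)
  fix f s g t x f'' s' tb
  assume fs: "(f, s) \<in> \<Sigma>" and gt: "split_epi C g t" and Y: "Cod C g = Cod C f"
    and pb: "is_pullback C f g x f''"
    and s': "s' \<in> hom C (Dom C g) (Dom C x)" "Cmp C f'' s' = Idn C (Dom C g)" "Cmp C x s' = Cmp C s g"
    and tb: "tb \<in> hom C (Dom C f) (Dom C x)" "Cmp C f'' tb = Cmp C t f" "Cmp C x tb = Idn C (Dom C f)"
  have "(f'', s') \<in> \<Sigma>"
    using pullback_in_fibrational[OF fib fs _ Y pb s'] gt by (simp add: split_epi_def)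
  then have "strongly_split C f'' s'"
    using pm unfolding Sigma_protomodular_def by blast
  moreover have "is_pullback C f'' t tb f"
    using pullback_along_section[OF C pb _ _ tb] gt Y by (simp add: split_epi_def)
  moreover have "t \<in> Arr C" "Cod C t = Cod C f''"
    using gt pullbackD[OF pb] by (simp_all add: split_epi_def hom_def)
  ultimately show "jointly_extremally_epic C s' tb"
    by (blast intro: jointly_extremally_epic_sym strongly_splitD)
qed

section \<open>Base change reflects isomorphisms\<close>

lemma mono_if_kernel_pair_diagonal_iso:
  assumes C: "category C" and kp: "is_pullback C a a p1 p2"
    and d: "d \<in> hom C (Dom C a) (Dom C p1)" "Cmp C p1 d = Idn C (Dom C a)" "Cmp C p2 d = Idn C (Dom C a)"
    and "iso C d"
  shows "mono C a"
  unfolding mono_def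
proof (intro conjI allI impI)
  note K = pullbackD[OF kp]
  show "a \<in> Arr C" by (fact K(1))
  have "p1 = p2"
    by (rule iso_cancel_right[OF C \<open>iso C d\<close>]) (use K d in \<open>simp_all add: hom_def\<close>)
  fix u v
  assume "u \<in> Arr C \<and> v \<in> Arr C \<and> Cod C u = Dom C a \<and> Cod C v = Dom C a \<and> Dom C u = Dom C v \<and>
    Cmp C a u = Cmp C a v"
  then obtain k where "Cmp C p1 k = u" "Cmp C p2 k = v"
    using pullback_mediator[OF kp, of u "Dom C u" v] by (auto simp: hom_def)
  then show "u = v" using \<open>p1 = p2\<close> by simp
qed

lemma eq_if_base_change_mono:
  assumes C: "category C" and a: "a \<in> hom C (Dom C f) (Dom C g)" "Cmp C g a = f"
    and pb1: "is_pullback C f y x1 f1" and pb2: "is_pullback C g y x2 f2"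
    and m: "m \<in> hom C (Dom C x1) (Dom C x2)" "Cmp C x2 m = Cmp C a x1" "Cmp C f2 m = f1" "mono C m"
    and u: "u \<in> hom C W (Dom C f)" "Cmp C f u = Cmp C y w"
    and v: "v \<in> hom C W (Dom C f)" "Cmp C f v = Cmp C y w"
    and w: "w \<in> hom C W (Dom C y)" and uv: "Cmp C a u = Cmp C a v"
  shows "u = v"
proof -
  note P1 = pullbackD[OF pb1] and P2 = pullbackD[OF pb2]
  obtain q1 where q1: "q1 \<in> hom C W (Dom C x1)" "Cmp C x1 q1 = u" "Cmp C f1 q1 = w"
    using pullback_mediator[OF pb1 u(1) w u(2)] by blast
  obtain q2 where q2: "q2 \<in> hom C W (Dom C x1)" "Cmp C x1 q2 = v" "Cmp C f1 q2 = w"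
    using pullback_mediator[OF pb1 v(1) w v(2)] by blast
  have mA: "m \<in> Arr C" "Dom C m = Dom C x1" "Cod C m = Dom C x2" using m(1) by (simp_all add: hom_def)
  have aA: "a \<in> Arr C" "Dom C a = Dom C f" using a(1) by (simp_all add: hom_def)
  note simps = C P1(1-8) P2(1-8) mA aA category_simps comp_reassoc[OF C m(2)] comp_reassoc[OF C m(3)]
  have "Cmp C m q1 = Cmp C m q2"
    by (rule pullback_cancel[OF C pb2, of _ W])
      (use q1 q2 uv in \<open>simp_all add: hom_def simps\<close>)
  then have "q1 = q2" using \<open>mono C m\<close> q1 q2 mA unfolding mono_def hom_def by auto
  then show ?thesis using q1 q2 by simp
qed

context
  fixes C :: "('o, 'a, 'm) cat_scheme" and f s g t a p1 p2 d :: 'a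
  assumes C: "category C" and P: "split_epi C f s" and Q: "split_epi C g t" and Y: "Cod C g = Cod C f"
    and a: "a \<in> hom C (Dom C f) (Dom C g)" "Cmp C g a = f" "Cmp C a s = t"
    and kp: "is_pullback C a a p1 p2"
    and d: "d \<in> hom C (Dom C f) (Dom C p1)" "Cmp C p1 d = Idn C (Dom C f)" "Cmp C p2 d = Idn C (Dom C f)"
begin

lemma kernel_pair_arrs:
  "a \<in> Arr C" "Dom C a = Dom C f" "Cod C a = Dom C g" "d \<in> Arr C" "Dom C d = Dom C f"
  "Cod C d = Dom C p1" "Cod C f \<in> Obj C"
  using a(1) d(1) C split_epiD[OF P] by (simp_all add: hom_def category_simps)

lemma kernel_pair_comp_eqs: "Cmp C a p2 = Cmp C a p1" "Cmp C f p2 = Cmp C f p1"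
proof -
  note K = pullbackD[OF kp]
  show ap: "Cmp C a p2 = Cmp C a p1" using K(9) by simp
  show "Cmp C f p2 = Cmp C f p1"
    using comp_reassoc[OF C a(2), of p2] comp_reassoc[OF C a(2), of p1] ap K(1,4-8) kernel_pair_arrs
      split_epiD[OF Q] Y
    by simp
qed

lemmas kernel_pair_simps = C kernel_pair_arrs kernel_pair_comp_eqs pullbackD(1,4-8)[OF kp]
  split_epiD[OF P] split_epiD[OF Q] Y category_simps comp_reassoc[OF C a(2)] comp_reassoc[OF C a(3)]
  comp_reassoc[OF C d(2)] comp_reassoc[OF C d(3)]
  comp_reassoc[OF C kernel_pair_comp_eqs(1)] comp_reassoc[OF C kernel_pair_comp_eqs(2)]

lemma split_epi_kernel_pair: "split_epi C (Cmp C f p1) (Cmp C d s)"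
  by (simp add: split_epi_def hom_def kernel_pair_simps)

lemma kernel_pair_Pt_lift:
  assumes u: "(W, (f, s), u1, b) \<in> Arr (Pt C)" and v: "(W, (f, s), u2, b) \<in> Arr (Pt C)"
    and k: "k \<in> hom C (Dom C (fst W)) (Dom C p1)" "Cmp C p1 k = u1" "Cmp C p2 k = u2"
  shows "(W, (Cmp C f p1, Cmp C d s), k, b) \<in> Arr (Pt C)"
proof -
  have W: "split_epi C (fst W) (snd W)" using u by (simp add: Pt_Arr_iff)
  have u1: "u1 \<in> Arr C" "Dom C u1 = Dom C (fst W)" "Cod C u1 = Dom C f" "b \<in> Arr C"
    "Dom C b = Cod C (fst W)" "Cod C b = Cod C f" "Cmp C f u1 = Cmp C b (fst W)"
    "Cmp C u1 (snd W) = Cmp C s b"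
    using u by (simp_all add: Pt_Arr_iff hom_def)
  have u2: "u2 \<in> Arr C" "Cod C u2 = Dom C f" "Cmp C u2 (snd W) = Cmp C s b"
    using v by (simp_all add: Pt_Arr_iff hom_def)
  have kA: "k \<in> Arr C" "Dom C k = Dom C (fst W)" "Cod C k = Dom C p1" using k(1) by (simp_all add: hom_def)
  have "Cmp C k (snd W) = Cmp C (Cmp C d s) b"
    by (rule pullback_cancel[OF C kp, of _ "Cod C (fst W)"])
      (use kA split_epiD[OF W] u1 u2 in
        \<open>simp_all add: hom_def kernel_pair_simps comp_reassoc[OF C k(2)] comp_reassoc[OF C k(3)]\<close>)
  then show ?thesis
    using W kA u1 k(2) split_epi_kernel_pair by (simp add: Pt_Arr_iff hom_def kernel_pair_simps)
qed

lemma kernel_pair_Pt: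
  "is_pullback (Pt C) ((f, s), (g, t), a, Idn C (Cod C f)) ((f, s), (g, t), a, Idn C (Cod C f))
    ((Cmp C f p1, Cmp C d s), (f, s), p1, Idn C (Cod C f)) ((Cmp C f p1, Cmp C d s), (f, s), p2, Idn C (Cod C f))"
  (is "is_pullback (Pt C) ?A ?A ?p1 ?p2")
  unfolding is_pullback_def
proof (intro conjI allI impI)
  let ?K = "(Cmp C f p1, Cmp C d s)"
  show "?A \<in> Arr (Pt C)" "?A \<in> Arr (Pt C)" "Cod (Pt C) ?A = Cod (Pt C) ?A"
    using P Q a by (simp_all add: Pt_Arr_iff hom_def kernel_pair_simps)
  show "?p1 \<in> hom (Pt C) (Dom (Pt C) ?p1) (Dom (Pt C) ?A)"
    "?p2 \<in> hom (Pt C) (Dom (Pt C) ?p1) (Dom (Pt C) ?A)"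
    using P split_epi_kernel_pair by (simp_all add: Pt_hom_iff Pt_Arr_iff hom_def kernel_pair_simps)
  show "Cmp (Pt C) ?A ?p1 = Cmp (Pt C) ?A ?p2" by (simp add: kernel_pair_comp_eqs)
  fix W u v
  assume uv: "u \<in> hom (Pt C) W (Dom (Pt C) ?A) \<and> v \<in> hom (Pt C) W (Dom (Pt C) ?A) \<and>
    Cmp (Pt C) ?A u = Cmp (Pt C) ?A v"
  obtain u1 b1 u2 b2 where u: "u = (W, (f, s), u1, b1)" "(W, (f, s), u1, b1) \<in> Arr (Pt C)"
    and v: "v = (W, (f, s), u2, b2)" "(W, (f, s), u2, b2) \<in> Arr (Pt C)"
    using uv by (auto simp: Pt_hom_iff)
  have uA: "u1 \<in> hom C (Dom C (fst W)) (Dom C a)" "u2 \<in> hom C (Dom C (fst W)) (Dom C a)"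
    "b1 \<in> Arr C" "Cod C b1 = Cod C f" "b2 \<in> Arr C" "Cod C b2 = Cod C f"
    using u(2) v(2) by (simp_all add: Pt_Arr_iff hom_def kernel_pair_simps)
  have "Cmp C a u1 = Cmp C a u2" and b: "b1 = b2"
    using uv u v uA by (simp_all add: kernel_pair_simps)
  then obtain k where k: "k \<in> hom C (Dom C (fst W)) (Dom C p1)" "Cmp C p1 k = u1" "Cmp C p2 k = u2"
    using pullback_mediator[OF kp uA(1,2)] by blast
  have m: "(W, ?K, k, b1) \<in> Arr (Pt C)"
    using kernel_pair_Pt_lift[OF u(2) _ k] v(2) b by simp
  show "\<exists>!m. m \<in> hom (Pt C) W (Dom (Pt C) ?p1) \<and> Cmp (Pt C) ?p1 m = u \<and> Cmp (Pt C) ?p2 m = v"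
  proof
    show "(W, ?K, k, b1) \<in> hom (Pt C) W (Dom (Pt C) ?p1) \<and>
      Cmp (Pt C) ?p1 (W, ?K, k, b1) = u \<and> Cmp (Pt C) ?p2 (W, ?K, k, b1) = v"
      using m u v k uA b by (simp add: Pt_hom_iff kernel_pair_simps)
  next
    fix m'
    assume m': "m' \<in> hom (Pt C) W (Dom (Pt C) ?p1) \<and> Cmp (Pt C) ?p1 m' = u \<and> Cmp (Pt C) ?p2 m' = v"
    then obtain k' b' where m'_eq: "m' = (W, ?K, k', b')" and "(W, ?K, k', b') \<in> Arr (Pt C)"
      by (auto simp: Pt_hom_iff)
    then have k': "k' \<in> hom C (Dom C (fst W)) (Dom C p1)" "b' \<in> Arr C" "Cod C b' = Cod C f"
      by (simp_all add: Pt_Arr_iff hom_def kernel_pair_simps)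
    have "Cmp C p1 k' = u1" "Cmp C p2 k' = u2" "b' = b1"
      using m' m'_eq u v k' by (simp_all add: kernel_pair_simps)
    then show "m' = (W, ?K, k, b1)"
      using pullback_cancel[OF C kp k'(1) k(1)] k m'_eq by simp
  qed
qed

lemma kernel_pair_in_Sigma:
  assumes pc: "point_congruous C \<Sigma>" and "(f, s) \<in> \<Sigma>" "(g, t) \<in> \<Sigma>"
  shows "(Cmp C f p1, Cmp C d s) \<in> \<Sigma>"
proof -
  let ?A = "((f, s), (g, t), a, Idn C (Cod C f))"
  have "?A \<in> Arr (Pt C)" using pullbackD(1)[OF kernel_pair_Pt] .
  then have "finite_diagram (Pt C) (cospan (Pt C) ?A ?A)"
    using finite_diagram_cospan[OF category_Pt[OF C]] by blast
  moreover have "\<forall>v \<in> Vtx (cospan (Pt C) ?A ?A). DObj (cospan (Pt C) ?A ?A) v \<in> \<Sigma>"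
    using assms(2,3) by (simp add: cospan_def)
  moreover note cospan_limit_if_pullback[OF category_Pt[OF C] kernel_pair_Pt]
  ultimately show ?thesis
    using pc unfolding point_congruous_def by fastforce
qed

lemma kernel_pair_diagonal_iso:
  assumes fc: "finitely_complete C" and pc: "point_congruous C \<Sigma>" and pm: "Sigma_protomodular C \<Sigma>"
    and fs: "(f, s) \<in> \<Sigma>" and gt: "(g, t) \<in> \<Sigma>" and y: "y \<in> Arr C" "Cod C y = Cod C f"
    and pb1: "is_pullback C f y x1 f1" and pb2: "is_pullback C g y x2 f2"
    and m: "m \<in> hom C (Dom C x1) (Dom C x2)" "Cmp C x2 m = Cmp C a x1" "Cmp C f2 m = f1" "mono C m"
  shows "iso C d"
proof -
  have ss: "strongly_split C (Cmp C f p1) (Cmp C d s)"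
    using pm kernel_pair_in_Sigma[OF pc fs gt] unfolding Sigma_protomodular_def by blast
  have "Cmp C f p1 \<in> Arr C" "Cod C y = Cod C (Cmp C f p1)" using y by (simp_all add: kernel_pair_simps)
  then obtain r f' where pbr: "is_pullback C (Cmp C f p1) y r f'"
    using pullback_exists[OF C fc _ y(1)] by blast
  have jee: "jointly_extremally_epic C r (Cmp C d s)"
    using strongly_splitD[OF ss y(1) _ pbr] y by (simp add: kernel_pair_simps)
  note R = pullbackD[OF pbr]
  have pr: "Cmp C p1 r = Cmp C p2 r"
    by (rule eq_if_base_change_mono[OF C a(1,2) pb1 pb2 m, where W = "Dom C r" and w = f'])
      (use R y in \<open>simp_all add: hom_def kernel_pair_simps\<close>)
  have "Cmp C p1 (Cmp C d (Cmp C p1 r)) = Cmp C p1 r" "Cmp C p2 (Cmp C d (Cmp C p1 r)) = Cmp C p2 r"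
    using R(4,6) pr by (simp_all add: kernel_pair_simps)
  then have "Cmp C d (Cmp C p1 r) = r"
    using pullback_cancel[OF C kp, of "Cmp C d (Cmp C p1 r)" "Dom C r" r] R(4,6)
    by (simp add: hom_def kernel_pair_simps)
  moreover have "mono C d"
    using mono_if_retraction[OF C _ pullbackD(4)[OF kp]] d(2) by (simp add: kernel_pair_simps)
  ultimately show "iso C d"
    using jointly_extremally_epicD[OF jee \<open>mono C d\<close>, of "Cmp C p1 r" s] R
    by (simp add: hom_def kernel_pair_simps)
qed

end

lemma mono_if_base_change_mono:
  assumes C: "category C" and fc: "finitely_complete C" and pc: "point_congruous C \<Sigma>"
    and pm: "Sigma_protomodular C \<Sigma>" and fs: "(f, s) \<in> \<Sigma>" and gt: "(g, t) \<in> \<Sigma>"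
    and P: "split_epi C f s" and Q: "split_epi C g t" and Y: "Cod C g = Cod C f"
    and a: "a \<in> hom C (Dom C f) (Dom C g)" "Cmp C g a = f" "Cmp C a s = t"
    and y: "y \<in> Arr C" "Cod C y = Cod C f"
    and pb1: "is_pullback C f y x1 f1" and pb2: "is_pullback C g y x2 f2"
    and m: "m \<in> hom C (Dom C x1) (Dom C x2)" "Cmp C x2 m = Cmp C a x1" "Cmp C f2 m = f1" "mono C m"
  shows "mono C a"
proof -
  have aA: "a \<in> Arr C" "Dom C a = Dom C f" using a(1) by (simp_all add: hom_def)
  obtain p1 p2 where kp: "is_pullback C a a p1 p2"
    using pullback_exists[OF C fc aA(1) aA(1) refl] .
  have "Idn C (Dom C f) \<in> hom C (Dom C f) (Dom C a)"
    using C split_epiD[OF P] aA by (simp add: hom_def category_simps)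
  then obtain d where d: "d \<in> hom C (Dom C f) (Dom C p1)" "Cmp C p1 d = Idn C (Dom C f)"
    "Cmp C p2 d = Idn C (Dom C f)"
    using pullback_mediator[OF kp] by blast
  have "iso C d"
    using kernel_pair_diagonal_iso[OF C P Q Y a kp d fc pc pm fs gt y pb1 pb2 m] .
  then show "mono C a"
    using mono_if_kernel_pair_diagonal_iso[OF C kp] d aA by simp
qed

lemma iso_if_base_change_iso:
  assumes C: "category C" and fc: "finitely_complete C" and pc: "point_congruous C \<Sigma>"
    and pm: "Sigma_protomodular C \<Sigma>" and fs: "(f, s) \<in> \<Sigma>" and gt: "(g, t) \<in> \<Sigma>"
    and P: "split_epi C f s" and Q: "split_epi C g t" and Y: "Cod C g = Cod C f"
    and a: "a \<in> hom C (Dom C f) (Dom C g)" "Cmp C g a = f" "Cmp C a s = t"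
    and y: "y \<in> Arr C" "Cod C y = Cod C f"
    and pb1: "is_pullback C f y x1 f1" and pb2: "is_pullback C g y x2 f2"
    and m: "m \<in> hom C (Dom C x1) (Dom C x2)" "Cmp C x2 m = Cmp C a x1" "Cmp C f2 m = f1" "iso C m"
  shows "iso C a"
proof -
  note P1 = pullbackD[OF pb1] and P2 = pullbackD[OF pb2] and PQ = split_epiD[OF P] split_epiD[OF Q]
  have "mono C a"
    using mono_if_base_change_mono[OF C fc pc pm fs gt P Q Y a y pb1 pb2 m(1-3) mono_if_iso[OF C m(4)]] .
  obtain m' where m': "m' \<in> hom C (Dom C x2) (Dom C x1)" "Cmp C m m' = Idn C (Dom C x2)"
    using iso_inverse[OF m(4)] m(1) by (auto simp: hom_def)
  have A: "a \<in> Arr C" "Dom C a = Dom C f" "Cod C a = Dom C g" "m \<in> Arr C" "Dom C m = Dom C x1"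
    "Cod C m = Dom C x2" "m' \<in> Arr C" "Dom C m' = Dom C x2" "Cod C m' = Dom C x1"
    using a m(1) m' by (simp_all add: hom_def)
  have "Cmp C a (Cmp C x1 m') = Cmp C x2 (Cmp C m m')"
    using C P1 P2 A by (simp add: category_simps comp_reassoc[OF C m(2)])
  then have x2: "Cmp C a (Cmp C x1 m') = x2" using C P2 m'(2) by (simp add: category_simps)
  have "strongly_split C g t" using pm gt unfolding Sigma_protomodular_def by blast
  then have "jointly_extremally_epic C x2 t"
    using strongly_splitD[OF _ y(1) _ pb2] y Y by simp
  then show ?thesis
    using jointly_extremally_epicD[OF _ \<open>mono C a\<close>, of x2 t "Cmp C x1 m'" s] x2 a(3) C P1 P2 PQ A
    by (simp add: hom_def category_simps)
qed

lemma Sigma_over_Arr_iff: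
  "(P, Q, a) \<in> Arr (Sigma_over C \<Sigma> Y) \<longleftrightarrow> P \<in> \<Sigma> \<and> Cod C (fst P) = Y \<and> Q \<in> \<Sigma> \<and> Cod C (fst Q) = Y \<and>
     a \<in> hom C (Dom C (fst P)) (Dom C (fst Q)) \<and> Cmp C (fst Q) a = fst P \<and> Cmp C a (snd P) = snd Q"
  by (simp add: Sigma_over_def)

lemma Sigma_over_Dom [simp]: "Dom (Sigma_over C \<Sigma> Y) (P, Q, a) = P"
  and Sigma_over_Cod [simp]: "Cod (Sigma_over C \<Sigma> Y) (P, Q, a) = Q"
  and Sigma_over_Cmp [simp]: "Cmp (Sigma_over C \<Sigma> Y) (Q', R, a') (P, Q, a) = (P, R, Cmp C a' a)"
  and Sigma_over_Idn [simp]: "Idn (Sigma_over C \<Sigma> Y) P = (P, P, Idn C (Dom C (fst P)))"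
  by (simp_all add: Sigma_over_def)

lemma iso_if_iso_Sigma_over:
  assumes "iso (Sigma_over C \<Sigma> Y) (P, Q, a)"
  shows "iso C a"
proof -
  obtain n where "(Q, P, n) \<in> Arr (Sigma_over C \<Sigma> Y)"
    "Cmp C n a = Idn C (Dom C (fst P))" "Cmp C a n = Idn C (Dom C (fst Q))"
    using assms unfolding iso_def by (auto simp: hom_def)
  moreover have "a \<in> hom C (Dom C (fst P)) (Dom C (fst Q))"
    using assms by (simp add: iso_def Sigma_over_Arr_iff)
  ultimately show ?thesis
    unfolding iso_def Sigma_over_Arr_iff by (auto simp: hom_def)
qed

lemma iso_Sigma_over_if_iso:
  assumes C: "category C" and \<Sigma>: "class_of_split_epis C \<Sigma>"
    and A: "(P, Q, a) \<in> Arr (Sigma_over C \<Sigma> Y)" and "iso C a"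
  shows "iso (Sigma_over C \<Sigma> Y) (P, Q, a)"
proof -
  obtain a' where a': "a' \<in> hom C (Cod C a) (Dom C a)" "Cmp C a' a = Idn C (Dom C a)"
    "Cmp C a a' = Idn C (Cod C a)"
    using iso_inverse[OF \<open>iso C a\<close>] .
  have P: "split_epi C (fst P) (snd P)" and Q: "split_epi C (fst Q) (snd Q)"
    using A \<Sigma> by (cases P, cases Q, auto simp: Sigma_over_Arr_iff class_of_split_epis_def)
  have a: "a \<in> Arr C" "Dom C a = Dom C (fst P)" "Cod C a = Dom C (fst Q)"
    and sq: "Cmp C (fst Q) a = fst P" "Cmp C a (snd P) = snd Q"
    using A by (simp_all add: Sigma_over_Arr_iff hom_def)
  have "Cmp C (Cmp C (fst Q) a) a' = fst Q"
    using C a a' split_epiD[OF Q] by (simp add: hom_def category_simps)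
  then have "Cmp C (fst P) a' = fst Q" by (simp add: sq(1))
  moreover have "Cmp C a' (Cmp C a (snd P)) = snd P"
    using C a a' split_epiD[OF P] by (simp add: hom_def category_simps comp_reassoc[OF C a'(2)])
  then have "Cmp C a' (snd Q) = snd P" by (simp add: sq(2))
  ultimately have "(Q, P, a') \<in> Arr (Sigma_over C \<Sigma> Y)"
    using A a' a by (simp add: Sigma_over_Arr_iff hom_def)
  then show ?thesis
    unfolding iso_def using A a' a by (intro conjI bexI[where x = "(Q, P, a')"]) (simp_all add: hom_def)
qed

lemma base_change_eq:
  assumes C: "category C" and fc: "finitely_complete C" and fg: "f \<in> Arr C" "g \<in> Arr C"
    and y: "y \<in> Arr C" "Cod C f = Cod C y" "Cod C g = Cod C y"
    and a: "a \<in> hom C (Dom C f) (Dom C g)" "Cmp C g a = f"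
  obtains x1 f1 x2 f2 m where "is_pullback C f y x1 f1" "is_pullback C g y x2 f2"
    "base_change C y ((f, s), (g, t), a) = (bc_obj C y (f, s), bc_obj C y (g, t), m)"
    "m \<in> hom C (Dom C x1) (Dom C x2)" "Cmp C x2 m = Cmp C a x1" "Cmp C f2 m = f1"
proof -
  obtain x1 f1 x2 f2 where pd: "pb_data C f y = (x1, f1)" "pb_data C g y = (x2, f2)"
    by (metis surj_pair)
  have pb1: "is_pullback C f y x1 f1" and pb2: "is_pullback C g y x2 f2"
    using is_pullback_pb_data[OF C fc _ y(1)] assms pd by (metis fst_conv snd_conv)+
  note P1 = pullbackD[OF pb1]
  have aA: "a \<in> Arr C" "Dom C a = Dom C f" "Cod C a = Dom C g" using a(1) by (simp_all add: hom_def)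
  have "Cmp C a x1 \<in> hom C (Dom C x1) (Dom C g)" "f1 \<in> hom C (Dom C x1) (Dom C y)"
    "Cmp C g (Cmp C a x1) = Cmp C y f1"
    using C P1 aA fg by (simp_all add: hom_def category_simps comp_reassoc[OF C a(2)])
  then have "\<exists>!m. m \<in> hom C (Dom C x1) (Dom C x2) \<and> Cmp C x2 m = Cmp C a x1 \<and> Cmp C f2 m = f1"
    using pb2 unfolding is_pullback_def by blast
  then have "\<exists>!m. m \<in> hom C (Dom C x1) (Dom C x2) \<and> Cmp C f2 m = f1 \<and> Cmp C x2 m = Cmp C a x1"
    by (simp only: conj_commute conj_left_commute)
  from theI'[OF this] show ?thesis
    using that[OF pb1 pb2] pd by (simp add: base_change_def)
qed

lemma base_change_conservative:
  assumes C: "category C" and fc: "finitely_complete C" and \<Sigma>: "class_of_split_epis C \<Sigma>"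
    and pc: "point_congruous C \<Sigma>" and pm: "Sigma_protomodular C \<Sigma>" and y: "y \<in> hom C Y' Y"
  shows "conservative (Sigma_over C \<Sigma> Y) (Sigma_over C \<Sigma> Y') (base_change C y)"
  unfolding conservative_def
proof (intro ballI impI)
  fix A
  assume A: "A \<in> Arr (Sigma_over C \<Sigma> Y)" and iso: "iso (Sigma_over C \<Sigma> Y') (base_change C y A)"
  obtain f s g t a where A_eq: "A = ((f, s), (g, t), a)" by (metis prod.exhaust)
  have fs: "(f, s) \<in> \<Sigma>" and gt: "(g, t) \<in> \<Sigma>" and Y: "Cod C f = Y" "Cod C g = Y"
    and a: "a \<in> hom C (Dom C f) (Dom C g)" "Cmp C g a = f" "Cmp C a s = t"
    using A by (simp_all add: A_eq Sigma_over_Arr_iff)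
  have P: "split_epi C f s" and Q: "split_epi C g t"
    using fs gt \<Sigma> by (auto simp: class_of_split_epis_def)
  have yA: "y \<in> Arr C" "Cod C y = Y" using y by (simp_all add: hom_def)
  obtain x1 f1 x2 f2 m where pb: "is_pullback C f y x1 f1" "is_pullback C g y x2 f2"
    and bc: "base_change C y A = (bc_obj C y (f, s), bc_obj C y (g, t), m)"
    and m: "m \<in> hom C (Dom C x1) (Dom C x2)" "Cmp C x2 m = Cmp C a x1" "Cmp C f2 m = f1"
    using base_change_eq[OF C fc split_epiD(1)[OF P] split_epiD(1)[OF Q] yA(1) _ _ a(1,2), where s = s and t = t]
      Y yA A_eq by metis
  have "iso C m" using iso bc iso_if_iso_Sigma_over by metis
  then have "iso C a"
    using iso_if_base_change_iso[OF C fc pc pm fs gt P Q _ a _ _ pb m] Y yA by simp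
  then show "iso (Sigma_over C \<Sigma> Y) A"
    using iso_Sigma_over_if_iso[OF C \<Sigma>] A A_eq by simp
qed

theorem theorem8p4:
  fixes C :: "('o, 'a) cat" and \<Sigma> :: "('a \<times> 'a) set"
  assumes "category C"
    and "finitely_complete C"
    and "class_of_split_epis C \<Sigma>"
    and "fibrational C \<Sigma>"
  shows "(Sigma_protomodular C \<Sigma> \<longrightarrow> Sigma_Maltsev C \<Sigma>) \<and>
         (Sigma_protomodular C \<Sigma> \<and> point_congruous C \<Sigma> \<longrightarrow>
            (\<forall>Y Y' y. y \<in> hom C Y' Y \<longrightarrow>
               conservative (Sigma_over C \<Sigma> Y) (Sigma_over C \<Sigma> Y') (base_change C y)))"
  using Sigma_Maltsev_if_Sigma_protomodular[OF assms(1,4)]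
    base_change_conservative[OF assms(1-3)] by blast

end
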